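(* Let $A^*\in\mathbb C^{N\times n}$ be isometric ($AA^*=I_n$), $x_0\in\mathbb C^n\setminus\{0\}$, $b=|A^*x_0|$, and let $\mathcal F(x)=A\big(b\odot\frac{A^*x}{|A^*x|}\big)$. Suppose $$\lambda_2:=\max\{\|\Im(B^*u)\|:\ u\in\mathbb C^n,\ \langle iu,x_0\rangle=0,\ \|u\|=1\}<1.$$ Then for every $0<\epsilon<1-\lambda_2^2$ there is a neighborhood of $x_0$ such that for every $x^{(1)}$ in it, the iterates $x^{(k+1)}=\mathcal F^k(x^{(1)})$ satisfy $$\|\alpha^{(k+1)}x^{(k+1)}-x_0\|\le(\lambda_2^2+\epsilon)\|\alpha^{(k)}x^{(k)}-x_0\|\quad\text{for all }k\ge1,$$ where $\alpha^{(k)}:=\arg\min\{\|\alpha x^{(k)}-x_0\|:\alpha\in\mathbb C,\ |\alpha|=1\}$. In particular $\alpha^{(k)}x^{(k)}\to x_0$ geometrically.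
   Context: $|y|$ is the componentwise modulus, $\odot$ the componentwise product, $y/|y|$ the componentwise quotient with convention $y(j)/|y(j)|=1$ if $y(j)=0$. $B:=A\,\mathrm{diag}\big(\frac{A^*x_0}{|A^*x_0|}\big)$. The real inner product on $\mathbb C^n$ is $\langle u,v\rangle=\Re(u^*v)$. *)

theory Defs
  imports "HOL-Analysis.Analysis"
begin

definition cadj :: "complex^'n^'m \<Rightarrow> complex^'m^'n" where
  "cadj M = (\<chi> i j. cnj (M $ j $ i))"

definition cabsv :: "complex^'n \<Rightarrow> complex^'n" where
  "cabsv y = (\<chi> j. complex_of_real (cmod (y $ j)))"

definition phasev :: "complex^'n \<Rightarrow> complex^'n" where
  "phasev y = (\<chi> j. if y $ j = 0 then 1 else y $ j / complex_of_real (cmod (y $ j)))"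

definition hadamard :: "complex^'n \<Rightarrow> complex^'n \<Rightarrow> complex^'n" where
  "hadamard u v = (\<chi> j. u $ j * v $ j)"

definition cdiag :: "complex^'n \<Rightarrow> complex^'n^'n" where
  "cdiag d = (\<chi> i j. if i = j then d $ i else 0)"

definition Imv :: "complex^'n \<Rightarrow> real^'n" where
  "Imv y = (\<chi> j. Im (y $ j))"

definition rinner :: "complex^'n \<Rightarrow> complex^'n \<Rightarrow> real" where
  "rinner u v = Re (\<Sum>j\<in>UNIV. cnj (u $ j) * v $ j)"

definition Fmap :: "complex^'N^'n \<Rightarrow> complex^'n \<Rightarrow> complex^'n \<Rightarrow> complex^'n" where
  "Fmap A x0 x = A *v hadamard (cabsv (cadj A *v x0)) (phasev (cadj A *v x))"

definition Bmat :: "complex^'N^'n \<Rightarrow> complex^'n \<Rightarrow> complex^'N^'n" where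
  "Bmat A x0 = A ** cdiag (phasev (cadj A *v x0))"

text \<open>lambda_2 (the maximum over a compact set, written as a supremum).\<close>
definition lambda2 :: "complex^'N^'n \<Rightarrow> complex^'n \<Rightarrow> real" where
  "lambda2 A x0 = Sup {norm (Imv (cadj (Bmat A x0) *v u)) | u.
       rinner (\<i> *s u) x0 = 0 \<and> norm u = 1}"

definition align_set :: "complex^'n \<Rightarrow> complex^'n \<Rightarrow> complex set" where
  "align_set x0 x = {\<alpha>. cmod \<alpha> = 1 \<and>
       (\<forall>\<beta>. cmod \<beta> = 1 \<longrightarrow> norm (\<alpha> *s x - x0) \<le> norm (\<beta> *s x - x0))}"

end

theory Submission
  imports Defs
begin

text \<open>
Let \<open>h = \<alpha>x - x0\<close> be the error after optimal phase alignment, so that \<open>Im \<langle>x0, h\<rangle> = 0\<close>.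
Linearising the phase map \<open>z \<mapsto> z/|z|\<close> at the nonzero entries of \<open>y = A\<^sup>*x0\<close> gives
\<open>\<alpha>F(x) - x0 = A L + O(\<parallel>h\<parallel>\<^sup>2)\<close>, where \<open>L\<close> has the entries \<open>i (y/|y|)\<^sub>j Im(B\<^sup>*h)\<^sub>j\<close> on the
support of \<open>y\<close>. Testing \<open>\<parallel>AL\<parallel>\<^sup>2\<close> against \<open>L\<close> gives \<open>\<parallel>AL\<parallel>\<^sup>2 \<le> \<parallel>Im B\<^sup>*h\<parallel> \<parallel>Im B\<^sup>*AL\<parallel>\<close>, and since
\<open>AL\<close> is again orthogonal to \<open>i x0\<close>, both factors are controlled by \<open>\<lambda>\<^sub>2\<close>: \<open>\<parallel>AL\<parallel> \<le> \<lambda>\<^sub>2\<^sup>2 \<parallel>h\<parallel>\<close>.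
Close to \<open>x0\<close> the quadratic remainder is absorbed by \<open>\<epsilon>\<close>, so the aligned distance to \<open>x0\<close>
contracts by the factor \<open>\<lambda>\<^sub>2\<^sup>2 + \<epsilon>\<close> at every step and the iterates never leave the neighbourhood.
\<close>

definition cinner :: "complex^'n \<Rightarrow> complex^'n \<Rightarrow> complex" where
  "cinner u v = (\<Sum>j\<in>UNIV. cnj (u $ j) * v $ j)"

lemma inner_eq_Re_cinner: "inner u v = Re (cinner u v)"
  by (simp add: inner_vec_def cinner_def inner_complex_def)

lemma rinner_eq_Re_cinner: "rinner u v = Re (cinner u v)"
  by (simp add: rinner_def cinner_def)

lemma cinner_cadj: "cinner u (M *v v) = cinner (cadj M *v u) v"
proof -
  have "cinner u (M *v v) = (\<Sum>i\<in>UNIV. \<Sum>j\<in>UNIV. cnj (u$i) * (M$i$j * v$j))"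
    by (simp add: cinner_def matrix_vector_mult_def sum_distrib_left)
  also have "\<dots> = (\<Sum>j\<in>UNIV. \<Sum>i\<in>UNIV. cnj (u$i) * (M$i$j * v$j))"
    by (rule sum.swap)
  also have "\<dots> = cinner (cadj M *v u) v"
    by (simp add: cinner_def matrix_vector_mult_def cadj_def sum_distrib_right sum_distrib_left mult_ac)
  finally show ?thesis .
qed

lemma inner_cadj: "inner u (M *v v) = inner (cadj M *v u) v"
  by (simp add: inner_eq_Re_cinner cinner_cadj)

lemma cadj_cadj [simp]: "cadj (cadj M) = M"
  by (simp add: cadj_def vec_eq_iff)

lemma cinner_smult_right: "cinner u (a *s v) = a * cinner u v"
  by (simp add: cinner_def sum_distrib_left mult_ac)

lemma cinner_smult_left: "cinner (a *s u) v = cnj a * cinner u v"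
  by (simp add: cinner_def sum_distrib_left mult_ac)

lemma cinner_diff_right: "cinner u (v - w) = cinner u v - cinner u w"
  by (simp add: cinner_def algebra_simps sum_subtractf)

lemma cinner_commute: "cinner v u = cnj (cinner u v)"
  by (simp add: cinner_def mult.commute)

lemma Im_cinner_self [simp]: "Im (cinner v v) = 0"
  by (simp add: cinner_def)

lemma norm_vec_power2: "(norm (v::complex^'n))\<^sup>2 = (\<Sum>j\<in>UNIV. (cmod (v$j))\<^sup>2)"
  by (simp add: norm_vec_def L2_set_def sum_nonneg)

lemma norm_smult_vec: "norm (a *s (v::complex^'n)) = cmod a * norm v"
  by (simp add: norm_vec_def L2_set_right_distrib norm_mult)

lemma matrix_vector_mult_smult: "(M::complex^'m^'n) *v (a *s v) = a *s (M *v v)"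
  by (simp add: vec_eq_iff matrix_vector_mult_def sum_distrib_left mult_ac)

lemma norm_cadj_mult_isometry:
  assumes iso: "(A::complex^'N^'n) ** cadj A = mat 1"
  shows "norm (cadj A *v u) = norm u"
proof -
  have "inner (cadj A *v u) (cadj A *v u) = inner u (A *v (cadj A *v u))"
    using inner_cadj[of u A "cadj A *v u"] by simp
  also have "\<dots> = inner u u" by (simp add: matrix_vector_mul_assoc iso)
  finally show ?thesis by (simp add: norm_eq_sqrt_inner)
qed

lemma norm_mult_coisometry_le:
  assumes iso: "(A::complex^'N^'n) ** cadj A = mat 1"
  shows "norm (A *v v) \<le> norm v"
proof -
  have "(norm (A *v v))\<^sup>2 = inner (cadj A *v (A *v v)) v"
    by (simp add: power2_norm_eq_inner inner_cadj)
  also have "\<dots> \<le> norm (A *v v) * norm v"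
    using norm_cauchy_schwarz norm_cadj_mult_isometry[OF iso] by metis
  finally show ?thesis
    by (metis mult_le_cancel_left_pos norm_ge_zero order.order_iff_strict power2_eq_square)
qed

subsection \<open>Linearisation of the phase map\<close>

lemma phase_linearization_real:
  fixes r :: real and z :: complex
  assumes r: "r > 0" and z: "cmod z \<le> r / 2"
  shows "cmod (of_real r * ((of_real r + z) / of_real (cmod (of_real r + z))) - of_real r - \<i> * of_real (Im z))
         \<le> 5 * (cmod z)\<^sup>2 / r"
proof -
  define q where "q = complex_of_real r + z"
  define \<rho> where "\<rho> = cmod q"
  have rr: "\<bar>r - \<rho>\<bar> \<le> cmod z"
    unfolding \<rho>_def q_def
    by (metis add_diff_cancel_left' norm_of_real norm_triangle_ineq3 abs_of_pos r abs_minus_commute)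
  hence rho_half: "\<rho> \<ge> r/2" using z by linarith
  have "complex_of_real r * (q / of_real \<rho>) - of_real r - \<i> * of_real (Im z)
        = (q / of_real \<rho> - 1) * of_real (r - \<rho>) + of_real (r - \<rho> + Re z)"
    using rho_half r unfolding q_def by (simp add: field_simps complex_eq_iff)
  hence "cmod (complex_of_real r * (q / of_real \<rho>) - of_real r - \<i> * of_real (Im z))
        \<le> cmod (q / of_real \<rho> - 1) * \<bar>r - \<rho>\<bar> + \<bar>r - \<rho> + Re z\<bar>"
    by (metis norm_mult norm_of_real norm_triangle_ineq)
  also have "\<dots> \<le> (4 * cmod z / r) * cmod z + (cmod z)\<^sup>2 / r"
  proof (intro add_mono mult_mono)
    have "cmod (q - of_real \<rho>) \<le> cmod (q - of_real r) + cmod (of_real r - of_real \<rho> :: complex)"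
      by (rule norm_diff_triangle_ineq[of q "of_real r" "of_real r" "of_real \<rho>", simplified])
    also have "\<dots> \<le> 2 * cmod z"
      using rr by (simp add: q_def norm_of_real flip: of_real_diff)
    moreover have "q / of_real \<rho> - 1 = (q - of_real \<rho>) / of_real \<rho>"
      using rho_half r by (simp add: field_simps)
    ultimately have "cmod (q / of_real \<rho> - 1) \<le> 2 * cmod z / \<rho>"
      using rho_half r by (simp add: divide_right_mono norm_divide)
    also have "\<dots> \<le> 2 * cmod z / (r/2)"
      using rho_half r by (intro divide_left_mono) auto
    finally show "cmod (q / of_real \<rho> - 1) \<le> 4 * cmod z / r" by simp
  next
    \<comment> \<open>\<open>\<rho> - Re q = (Im q)\<^sup>2 / (\<rho> + Re q)\<close>, which is quadratically small\<close>
    have "\<rho>\<^sup>2 = (Re q)\<^sup>2 + (Im z)\<^sup>2" unfolding \<rho>_def q_def using cmod_power2 by simp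
    hence prod: "(\<rho> - Re q) * (\<rho> + Re q) = (Im z)\<^sup>2" by (simp add: algebra_simps power2_eq_square)
    have pos: "\<rho> + Re q \<ge> r" using rho_half z abs_Re_le_cmod[of z] unfolding q_def by simp
    have "\<bar>r - \<rho> + Re z\<bar> = \<rho> - Re q"
      using abs_Re_le_cmod[of q] unfolding \<rho>_def q_def by simp
    also have "\<dots> = (Im z)\<^sup>2 / (\<rho> + Re q)" using prod pos r by (simp add: field_simps)
    also have "\<dots> \<le> (Im z)\<^sup>2 / r" using pos r by (intro divide_left_mono) auto
    also have "\<dots> \<le> (cmod z)\<^sup>2 / r"
      using r by (intro divide_right_mono)
        (auto simp: abs_le_square_iff[symmetric] abs_Im_le_cmod)
    finally show "\<bar>r - \<rho> + Re z\<bar> \<le> (cmod z)\<^sup>2 / r" .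
  qed (use rr r in auto)
  also have "\<dots> = 5 * (cmod z)\<^sup>2 / r" by (simp add: field_simps power2_eq_square)
  finally show ?thesis unfolding q_def \<rho>_def .
qed

lemma phase_linearization:
  fixes y g :: complex
  assumes y: "y \<noteq> 0" and g: "cmod g \<le> cmod y / 2"
  shows "cmod (of_real (cmod y) * ((y + g) / of_real (cmod (y + g))) - y
     - (y / of_real (cmod y)) * (\<i> * of_real (Im (cnj (y / of_real (cmod y)) * g)))) \<le> 5 * (cmod g)\<^sup>2 / cmod y"
proof -
  define r where "r = cmod y"
  define \<omega> where "\<omega> = y / of_real r"
  define z where "z = cnj \<omega> * g"
  have r: "r > 0" using y r_def by simp
  have om: "cmod \<omega> = 1" using r y unfolding \<omega>_def r_def by (simp add: norm_divide)
  hence "\<omega> * cnj \<omega> = 1" using complex_norm_square[of \<omega>] by simp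
  hence yg: "y = \<omega> * of_real r" "y + g = \<omega> * (of_real r + z)"
    unfolding z_def \<omega>_def using r by (simp_all add: algebra_simps)
  have zg: "cmod z = cmod g" unfolding z_def using om by (simp add: norm_mult)
  have nyg: "cmod (y + g) = cmod (of_real r + z)" using yg(2) om by (simp add: norm_mult)
  have "of_real (cmod y) * ((y + g) / of_real (cmod (y + g))) - y
     - (y / of_real (cmod y)) * (\<i> * of_real (Im (cnj (y / of_real (cmod y)) * g)))
     = \<omega> * (of_real r * ((of_real r + z) / of_real (cmod (of_real r + z))) - of_real r - \<i> * of_real (Im z))"
    unfolding r_def[symmetric] \<omega>_def[symmetric] z_def[symmetric] nyg
    by (subst yg(2), subst yg(1), simp add: algebra_simps)
  hence "cmod (of_real (cmod y) * ((y + g) / of_real (cmod (y + g))) - y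
     - (y / of_real (cmod y)) * (\<i> * of_real (Im (cnj (y / of_real (cmod y)) * g))))
     = cmod (of_real r * ((of_real r + z) / of_real (cmod (of_real r + z))) - of_real r - \<i> * of_real (Im z))"
    using om by (simp add: norm_mult)
  also have "\<dots> \<le> 5 * (cmod z)\<^sup>2 / r"
    using zg g r_def by (intro phase_linearization_real[OF r]) simp
  finally show ?thesis using zg r_def by simp
qed

subsection \<open>The constant \<open>\<lambda>\<^sub>2\<close>\<close>

lemma cadj_Bmat_mult_component:
  "(cadj (Bmat A x0) *v z) $ j = cnj (phasev (cadj A *v x0) $ j) * (cadj A *v z) $ j"
  by (simp add: Bmat_def cadj_def matrix_vector_mult_def matrix_matrix_mult_def cdiag_def
      sum_distrib_left sum_distrib_right mult_ac if_distrib cong: if_cong)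

lemma norm_phasev_component [simp]: "cmod (phasev y $ j) = 1"
  by (simp add: phasev_def norm_divide)

lemma norm_cadj_Bmat_mult:
  assumes iso: "(A::complex^'N^'n) ** cadj A = mat 1"
  shows "norm (cadj (Bmat A x0) *v u) = norm u"
proof -
  have "norm (cadj (Bmat A x0) *v u) = norm (cadj A *v u)"
    unfolding norm_vec_def by (simp add: cadj_Bmat_mult_component norm_mult)
  thus ?thesis using norm_cadj_mult_isometry[OF iso] by simp
qed

lemma norm_Imv_le: "norm (Imv v) \<le> norm v"
  by (rule norm_le_componentwise_cart) (simp add: Imv_def abs_Im_le_cmod)

lemma Imv_smult_of_real: "Imv (complex_of_real c *s v) = c *\<^sub>R Imv v"
  by (simp add: Imv_def vec_eq_iff)

lemma norm_Imv_cadj_Bmat_le_lambda2: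
  assumes iso: "(A::complex^'N^'n) ** cadj A = mat 1"
    and orth: "Im (cinner x0 z) = 0"
  shows "norm (Imv (cadj (Bmat A x0) *v z)) \<le> lambda2 A x0 * norm z"
proof (cases "z = 0")
  case True
  have "Imv (cadj (Bmat A x0) *v z) = 0" unfolding True by (simp add: Imv_def vec_eq_iff)
  then show ?thesis using True by simp
next
  case False
  define S where "S = {norm (Imv (cadj (Bmat A x0) *v u)) | u. rinner (\<i> *s u) x0 = 0 \<and> norm u = 1}"
  define u where "u = complex_of_real (1 / norm z) *s z"
  have "norm u = 1" unfolding u_def using False by (simp add: norm_smult_vec norm_divide)
  moreover have "rinner (\<i> *s u) x0 = 0"
    using orth unfolding u_def rinner_eq_Re_cinner cinner_smult_left cinner_commute[of _ x0]
    by (simp add: cinner_smult_right)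
  ultimately have "norm (Imv (cadj (Bmat A x0) *v u)) \<in> S" unfolding S_def by blast
  moreover have "bdd_above S"
    unfolding S_def
    by (auto intro!: bdd_aboveI[of _ 1] order.trans[OF norm_Imv_le] simp: norm_cadj_Bmat_mult[OF iso])
  ultimately have "norm (Imv (cadj (Bmat A x0) *v u)) \<le> lambda2 A x0"
    unfolding lambda2_def S_def[symmetric] by (rule cSup_upper)
  thus ?thesis
    using False unfolding u_def matrix_vector_mult_smult Imv_smult_of_real
    by (simp add: field_simps)
qed

subsection \<open>Optimal phase alignment\<close>

definition phase_dist :: "complex^'n \<Rightarrow> complex^'n \<Rightarrow> real" where
  "phase_dist x0 x = (INF \<beta>\<in>{\<beta>. cmod \<beta> = 1}. norm (\<beta> *s x - x0))"

lemma norm_rotate_diff_power2: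
  fixes x x0 :: "complex^'n"
  assumes "cmod \<beta> = 1"
  shows "(norm (\<beta> *s x - x0))\<^sup>2 = (norm x)\<^sup>2 + (norm x0)\<^sup>2 - 2 * Re (\<beta> * cinner x0 x)"
proof -
  have "(norm (\<beta> *s x - x0))\<^sup>2 = (norm (\<beta> *s x))\<^sup>2 + (norm x0)\<^sup>2 - 2 * inner x0 (\<beta> *s x)"
    by (simp add: power2_norm_eq_inner inner_diff_left inner_diff_right inner_commute)
  with assms show ?thesis by (simp add: norm_smult_vec inner_eq_Re_cinner cinner_smult_right)
qed

lemma exists_unimodular_Re_eq_cmod: "\<exists>\<beta>. cmod \<beta> = 1 \<and> Re (\<beta> * c) = cmod c"
proof (cases "c = 0")
  case False
  then show ?thesis
    by (intro exI[of _ "cnj c / cmod c"])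
      (simp add: norm_divide complex_norm_square[symmetric] power2_eq_square mult.commute)
qed (auto intro: exI[of _ 1])

lemma align_set_iff:
  "a \<in> align_set x0 x \<longleftrightarrow> cmod a = 1 \<and> Re (a * cinner x0 x) = cmod (cinner x0 x)"
proof -
  have le: "Re (\<beta> * cinner x0 x) \<le> cmod (cinner x0 x)" if "cmod \<beta> = 1" for \<beta>
    using complex_Re_le_cmod[of "\<beta> * cinner x0 x"] that by (simp add: norm_mult)
  have "norm (a *s x - x0) \<le> norm (\<beta> *s x - x0) \<longleftrightarrow> Re (\<beta> * cinner x0 x) \<le> Re (a * cinner x0 x)"
    if "cmod a = 1" "cmod \<beta> = 1" for \<beta>
    using norm_rotate_diff_power2[OF that(1), of x x0] norm_rotate_diff_power2[OF that(2), of x x0]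
    by (smt (verit) norm_ge_zero power2_le_imp_le power_mono)
  moreover note exists_unimodular_Re_eq_cmod[of "cinner x0 x"]
  ultimately show ?thesis
    unfolding align_set_def using le by (smt (verit) mem_Collect_eq)
qed

lemma align_set_nonempty: "\<exists>a. a \<in> align_set x0 x"
  by (metis align_set_iff exists_unimodular_Re_eq_cmod)

lemma Im_cinner_align_set:
  assumes "a \<in> align_set x0 x"
  shows "Im (cinner x0 (a *s x)) = 0"
proof -
  have "Re (a * cinner x0 x) = cmod (a * cinner x0 x)"
    using assms by (simp add: align_set_iff norm_mult)
  hence "(Im (a * cinner x0 x))\<^sup>2 = 0" using cmod_power2[of "a * cinner x0 x"] by simp
  thus ?thesis by (simp add: cinner_smult_right)
qed

lemma phase_dist_eq_align_set:
  assumes "a \<in> align_set x0 x"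
  shows "phase_dist x0 x = norm (a *s x - x0)"
  unfolding phase_dist_def
proof (rule cInf_eq_minimum)
  show "norm (a *s x - x0) \<in> (\<lambda>\<beta>. norm (\<beta> *s x - x0)) ` {\<beta>. cmod \<beta> = 1}"
    using assms unfolding align_set_def by blast
qed (use assms in \<open>auto simp: align_set_def\<close>)

lemma phase_dist_le:
  assumes "cmod \<beta> = 1"
  shows "phase_dist x0 x \<le> norm (\<beta> *s x - x0)"
proof -
  obtain a where a: "a \<in> align_set x0 x" using align_set_nonempty by blast
  then have "norm (a *s x - x0) \<le> norm (\<beta> *s x - x0)" using assms by (simp add: align_set_def)
  with a show ?thesis by (simp add: phase_dist_eq_align_set)
qed

lemma phase_dist_nonneg: "0 \<le> phase_dist x0 x"
proof -
  obtain a where "a \<in> align_set x0 x" using align_set_nonempty by blast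
  then show ?thesis by (simp add: phase_dist_eq_align_set)
qed

subsection \<open>The first-order term of \<open>\<alpha> F(x) - x0\<close>\<close>

definition linear_part :: "complex^'N^'n \<Rightarrow> complex^'n \<Rightarrow> complex^'n \<Rightarrow> complex^'N" where
  "linear_part A x0 h = (\<chi> j. if (cadj A *v x0) $ j = 0 then 0
     else phasev (cadj A *v x0) $ j * (\<i> * of_real (Imv (cadj (Bmat A x0) *v h) $ j)))"

lemma linear_part_component:
  "linear_part A x0 h $ j = (if (cadj A *v x0) $ j = 0 then 0 else phasev (cadj A *v x0) $ j
     * (\<i> * of_real (Im (cnj (phasev (cadj A *v x0) $ j) * (cadj A *v h) $ j))))"
  by (simp add: linear_part_def Imv_def cadj_Bmat_mult_component)

lemma phasev_polar: "y $ j = of_real (cmod (y $ j)) * phasev y $ j"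
  by (simp add: phasev_def)

lemma Im_cnj_mult_rotate:
  assumes "y = of_real (cmod y) * \<omega>" "cmod \<omega> = 1"
  shows "Im (cnj y * (\<omega> * (\<i> * of_real (Im (cnj \<omega> * g))))) = Im (cnj y * g)"
proof -
  have y: "Re y = cmod y * Re \<omega>" "Im y = cmod y * Im \<omega>"
    using arg_cong[OF assms(1), of Re] arg_cong[OF assms(1), of Im] by simp_all
  have "Im (cnj y * (\<omega> * (\<i> * of_real (Im (cnj \<omega> * g)))))
      = cmod y * Im (cnj \<omega> * g) * ((Re \<omega>)\<^sup>2 + (Im \<omega>)\<^sup>2)"
    by (simp add: y power2_eq_square algebra_simps)
  also have "(Re \<omega>)\<^sup>2 + (Im \<omega>)\<^sup>2 = 1" using assms(2) cmod_power2[of \<omega>] by simp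
  finally show ?thesis by (simp add: y algebra_simps)
qed

lemma Im_cinner_linear_part:
  assumes iso: "(A::complex^'N^'n) ** cadj A = mat 1"
  shows "Im (cinner x0 (A *v linear_part A x0 h)) = Im (cinner x0 h)"
proof -
  define y where "y = cadj A *v x0"
  define g where "g = cadj A *v h"
  have "Im (cinner x0 (A *v linear_part A x0 h)) = (\<Sum>j\<in>UNIV. Im (cnj (y$j) * linear_part A x0 h $ j))"
    unfolding cinner_cadj y_def by (simp add: cinner_def)
  also have "\<dots> = (\<Sum>j\<in>UNIV. Im (cnj (y$j) * g$j))"
    using Im_cnj_mult_rotate[OF phasev_polar norm_phasev_component, of y]
    by (intro sum.cong refl) (simp add: linear_part_component y_def[symmetric] g_def[symmetric])
  also have "\<dots> = Im (cinner y g)" by (simp add: cinner_def)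
  also have "cinner y g = cinner (A *v y) h" unfolding g_def cinner_cadj by simp
  also have "A *v y = x0" by (simp add: y_def matrix_vector_mul_assoc iso)
  finally show ?thesis .
qed

lemma sum_abs_mult_le_norm: "(\<Sum>j\<in>UNIV. \<bar>(w::real^'N) $ j\<bar> * \<bar>v $ j\<bar>) \<le> norm w * norm v"
proof -
  have "(\<Sum>j\<in>UNIV. \<bar>w $ j\<bar> * \<bar>v $ j\<bar>) = inner (\<chi> j. \<bar>w $ j\<bar>) (\<chi> j. \<bar>v $ j\<bar>)"
    by (simp add: inner_vec_def)
  also have "\<dots> \<le> norm (\<chi> j. \<bar>w $ j\<bar>) * norm (\<chi> j. \<bar>v $ j\<bar>)" by (rule norm_cauchy_schwarz)
  also have "\<dots> = norm w * norm v" by (simp add: norm_vec_def)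
  finally show ?thesis .
qed

lemma norm_linear_part_power2_le:
  fixes A :: "complex^'N^'n" and x0 h :: "complex^'n"
  defines "L \<equiv> A *v linear_part A x0 h"
  shows "(norm L)\<^sup>2 \<le> norm (Imv (cadj (Bmat A x0) *v h)) * norm (Imv (cadj (Bmat A x0) *v L))"
proof -
  define w where "w = Imv (cadj (Bmat A x0) *v h)"
  define v where "v = Imv (cadj (Bmat A x0) *v L)"
  define q where "q = cadj A *v L"
  have "(norm L)\<^sup>2 = inner q (linear_part A x0 h)"
    unfolding q_def L_def by (simp add: power2_norm_eq_inner inner_cadj)
  also have "\<dots> = (\<Sum>j\<in>UNIV. Re (cnj (q$j) * linear_part A x0 h $ j))"
    by (simp add: inner_eq_Re_cinner cinner_def)
  also have "\<dots> \<le> (\<Sum>j\<in>UNIV. \<bar>w$j\<bar> * \<bar>v$j\<bar>)"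
  proof (rule sum_mono)
    fix j
    have "Re (cnj (q$j) * linear_part A x0 h $ j) = (if (cadj A *v x0) $ j = 0 then 0 else w$j * v$j)"
      by (simp add: linear_part_def w_def v_def q_def Imv_def cadj_Bmat_mult_component algebra_simps)
    thus "Re (cnj (q$j) * linear_part A x0 h $ j) \<le> \<bar>w$j\<bar> * \<bar>v$j\<bar>"
      using abs_ge_self[of "w$j * v$j"] by (simp add: abs_mult)
  qed
  also have "\<dots> \<le> norm w * norm v" by (rule sum_abs_mult_le_norm)
  finally show ?thesis unfolding w_def v_def .
qed

lemma norm_linear_part_le:
  assumes iso: "(A::complex^'N^'n) ** cadj A = mat 1"
    and orth: "Im (cinner x0 h) = 0"
  shows "norm (A *v linear_part A x0 h) \<le> (lambda2 A x0)\<^sup>2 * norm h"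
proof (cases "A *v linear_part A x0 h = 0")
  case False
  define N where "N = norm (A *v linear_part A x0 h)"
  define lam where "lam = lambda2 A x0"
  have w: "norm (Imv (cadj (Bmat A x0) *v h)) \<le> lam * norm h"
    unfolding lam_def by (rule norm_Imv_cadj_Bmat_le_lambda2[OF iso orth])
  have v: "norm (Imv (cadj (Bmat A x0) *v (A *v linear_part A x0 h))) \<le> lam * N"
    unfolding lam_def N_def
    by (rule norm_Imv_cadj_Bmat_le_lambda2[OF iso]) (simp add: Im_cinner_linear_part[OF iso] orth)
  have "N\<^sup>2 \<le> (lam * norm h) * (lam * N)"
    unfolding N_def using norm_linear_part_power2_le[of A x0 h]
    by (smt (verit) w v[unfolded N_def] mult_mono norm_ge_zero)
  moreover have "N > 0" using False N_def by simp
  ultimately show ?thesis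
    unfolding N_def[symmetric] lam_def[symmetric] by (simp add: power2_eq_square mult_ac)
qed simp

lemma smult_phasev_component:
  assumes "cmod a = 1" "a * c $ j = w" "w \<noteq> 0"
  shows "a * phasev c $ j = w / of_real (cmod w)"
proof -
  have "c $ j \<noteq> 0" and "cmod (c $ j) = cmod w"
    using assms arg_cong[OF assms(2), of cmod] by (auto simp: norm_mult)
  then show ?thesis using assms(2) by (simp add: phasev_def)
qed

lemma norm_le_of_component_le_power2:
  fixes E g :: "complex^'n"
  assumes "\<And>j. cmod (E$j) \<le> C * (cmod (g$j))\<^sup>2"
  shows "norm E \<le> C * (norm g)\<^sup>2"
proof -
  have "norm E \<le> (\<Sum>j\<in>UNIV. cmod (E$j))" unfolding norm_vec_def by (rule L2_set_le_sum) simp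
  also have "\<dots> \<le> (\<Sum>j\<in>UNIV. C * (cmod (g$j))\<^sup>2)" by (rule sum_mono) (rule assms)
  also have "\<dots> = C * (norm g)\<^sup>2" by (simp add: norm_vec_power2 sum_distrib_left)
  finally show ?thesis .
qed

lemma Fmap_first_order:
  fixes A :: "complex^'N^'n"
  assumes iso: "A ** cadj A = mat 1" and a: "cmod a = 1"
    and r: "0 < r" "\<And>j. (cadj A *v x0) $ j \<noteq> 0 \<Longrightarrow> r \<le> cmod ((cadj A *v x0) $ j)"
    and small: "norm (a *s x - x0) \<le> r / 2"
  shows "norm (a *s Fmap A x0 x - x0 - A *v linear_part A x0 (a *s x - x0))
    \<le> 5 / r * (norm (a *s x - x0))\<^sup>2"
proof -
  define y where "y = cadj A *v x0"
  define h where "h = a *s x - x0"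
  define g where "g = cadj A *v h"
  define E where "E = (\<chi> j. of_real (cmod (y$j)) * (a * phasev (cadj A *v x) $ j)) - y - linear_part A x0 h"
  have decomp: "a *s Fmap A x0 x - x0 - A *v linear_part A x0 h = A *v E"
  proof -
    have "a *s Fmap A x0 x = A *v (\<chi> j. of_real (cmod (y$j)) * (a * phasev (cadj A *v x) $ j))"
      unfolding Fmap_def y_def matrix_vector_mult_smult[symmetric]
      by (rule arg_cong[where f="(*v) A"]) (simp add: hadamard_def cabsv_def vec_eq_iff mult_ac)
    moreover have "x0 = A *v y" by (simp add: y_def matrix_vector_mul_assoc iso)
    ultimately show ?thesis unfolding E_def by (simp add: matrix_vector_mult_diff_distrib)
  qed
  have "cmod (E$j) \<le> 5 / r * (cmod (g$j))\<^sup>2" for j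
  proof (cases "y$j = 0")
    case False
    have "cmod (g$j) \<le> norm h"
      using Finite_Cartesian_Product.norm_nth_le[of g j] norm_cadj_mult_isometry[OF iso, of h] by (simp add: g_def)
    hence g_small: "cmod (g$j) \<le> cmod (y$j) / 2" using small r(2)[OF False[unfolded y_def]] by (simp add: h_def y_def)
    have ax: "a * (cadj A *v x) $ j = y$j + g$j"
      by (simp add: y_def g_def h_def matrix_vector_mult_diff_distrib matrix_vector_mult_smult)
    have "cmod (y$j) - cmod (g$j) \<le> cmod (y$j + g$j)" by (rule norm_diff_ineq)
    moreover have "0 < cmod (y$j)" using False by simp
    ultimately have "y$j + g$j \<noteq> 0" using g_small by (intro notI) simp
    hence "a * phasev (cadj A *v x) $ j = (y$j + g$j) / of_real (cmod (y$j + g$j))"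
      by (rule smult_phasev_component[OF a ax])
    hence "E$j = of_real (cmod (y$j)) * ((y$j + g$j) / of_real (cmod (y$j + g$j))) - y$j
       - (y$j / of_real (cmod (y$j))) * (\<i> * of_real (Im (cnj (y$j / of_real (cmod (y$j))) * g$j)))"
      using False by (simp add: E_def linear_part_component y_def[symmetric] g_def h_def phasev_def)
    hence "cmod (E$j) \<le> 5 * (cmod (g$j))\<^sup>2 / cmod (y$j)"
      using phase_linearization[OF False g_small] by simp
    also have "\<dots> \<le> 5 * (cmod (g$j))\<^sup>2 / r"
      using r(1) r(2)[OF False[unfolded y_def]] by (intro divide_left_mono mult_pos_pos) (auto simp: y_def)
    finally show ?thesis by simp
  qed (use r(1) in \<open>simp add: E_def linear_part_component y_def\<close>)
  then have "norm E \<le> 5 / r * (norm g)\<^sup>2" by (rule norm_le_of_component_le_power2)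
  then show ?thesis
    using decomp norm_mult_coisometry_le[OF iso, of E] norm_cadj_mult_isometry[OF iso, of h]
    unfolding h_def g_def by simp
qed

lemma phase_dist_Fmap_contraction:
  fixes A :: "complex^'N^'n"
  assumes iso: "A ** cadj A = mat 1" and eps: "0 < \<epsilon>"
  obtains \<delta> where "0 < \<delta>"
    "\<And>x. phase_dist x0 x < \<delta> \<Longrightarrow>
       phase_dist x0 (Fmap A x0 x) \<le> ((lambda2 A x0)\<^sup>2 + \<epsilon>) * phase_dist x0 x"
proof
  define y where "y = cadj A *v x0"
  \<comment> \<open>the smallest nonzero modulus of \<open>A\<^sup>*x0\<close> (the \<open>1\<close> only guards against an empty set)\<close>
  define r where "r = Min (insert 1 {cmod (y$j) | j. y$j \<noteq> 0})"
  have r: "0 < r" "\<And>j. y$j \<noteq> 0 \<Longrightarrow> r \<le> cmod (y$j)"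
    unfolding r_def by (auto intro: Min_le)
  show "0 < min (r/2) (\<epsilon> * r / 5)" using r eps by simp
  fix x assume near: "phase_dist x0 x < min (r/2) (\<epsilon> * r / 5)"
  obtain a where a: "a \<in> align_set x0 x" using align_set_nonempty by blast
  define h where "h = a *s x - x0"
  have h: "norm h = phase_dist x0 x" unfolding h_def using phase_dist_eq_align_set[OF a] by simp
  have a1: "cmod a = 1" using a by (simp add: align_set_def)
  have orth: "Im (cinner x0 h) = 0"
    unfolding h_def cinner_diff_right using Im_cinner_align_set[OF a] by simp
  have "phase_dist x0 (Fmap A x0 x) \<le> norm (a *s Fmap A x0 x - x0)"
    by (rule phase_dist_le[OF a1])
  also have "\<dots> \<le> norm (A *v linear_part A x0 h) + norm (a *s Fmap A x0 x - x0 - A *v linear_part A x0 h)"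
    by (rule norm_triangle_sub)
  also have "\<dots> \<le> norm (A *v linear_part A x0 h) + 5 / r * (norm h)\<^sup>2"
    using Fmap_first_order[OF iso a1 r(1) r(2)[unfolded y_def], of x] near
    unfolding h_def[symmetric] h by simp
  also have "\<dots> \<le> (lambda2 A x0)\<^sup>2 * norm h + \<epsilon> * norm h"
  proof (rule add_mono[OF norm_linear_part_le[OF iso orth]])
    have "5 / r * norm h \<le> \<epsilon>" using near h r(1) by (simp add: field_simps)
    from mult_right_mono[OF this norm_ge_zero[of h]]
    show "5 / r * (norm h)\<^sup>2 \<le> \<epsilon> * norm h" by (simp add: power2_eq_square mult_ac)
  qed
  finally show "phase_dist x0 (Fmap A x0 x) \<le> ((lambda2 A x0)\<^sup>2 + \<epsilon>) * phase_dist x0 x"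
    by (simp add: h distrib_right)
qed

lemma funpow_contraction_near:
  fixes d :: "'a \<Rightarrow> real"
  assumes contr: "\<And>y. d y < \<delta> \<Longrightarrow> d (f y) \<le> \<kappa> * d y"
    and nonneg: "\<And>y. 0 \<le> d y" and \<kappa>: "0 \<le> \<kappa>" "\<kappa> \<le> 1" and start: "d x < \<delta>"
  shows "d ((f ^^ n) x) < \<delta> \<and> d ((f ^^ n) x) \<le> \<kappa> ^ n * d x"
proof (induction n)
  case (Suc n)
  then have "d ((f ^^ Suc n) x) \<le> \<kappa> * d ((f ^^ n) x)" by (simp add: contr)
  moreover have "\<kappa> * d ((f ^^ n) x) \<le> d ((f ^^ n) x)"
    using \<kappa> nonneg by (simp add: mult_left_le_one_le)
  moreover have "\<kappa> * d ((f ^^ n) x) \<le> \<kappa> * (\<kappa> ^ n * d x)"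
    using Suc \<kappa> by (simp add: mult_left_mono)
  ultimately show ?case using Suc by simp
qed (simp add: start)

lemma LIMSEQ_align_set_geometric:
  fixes \<kappa> :: real
  assumes "\<And>k. \<alpha> k \<in> align_set x0 (x k)" "\<And>k. phase_dist x0 (x k) \<le> \<kappa> ^ k * c"
    and "0 \<le> \<kappa>" "\<kappa> < 1"
  shows "(\<lambda>k. \<alpha> k *s x k) \<longlonglongrightarrow> x0"
proof -
  have "norm (\<alpha> k *s x k - x0) \<le> \<kappa> ^ k * c" for k
    using assms(2)[of k] by (simp add: phase_dist_eq_align_set[OF assms(1)])
  hence "eventually (\<lambda>k. norm (\<alpha> k *s x k - x0) \<le> \<kappa> ^ k * c) sequentially"
    by (intro always_eventually allI)
  moreover have "(\<lambda>k. \<kappa> ^ k * c) \<longlonglongrightarrow> 0"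
    using assms(3,4) by (intro tendsto_mult_left_zero LIMSEQ_power_zero) simp
  ultimately show ?thesis by (rule Lim_null_comparison[THEN LIM_zero_cancel])
qed

lemma phase_dist_Fmap_iterates:
  fixes A :: "complex^'N^'n"
  assumes iso: "A ** cadj A = mat 1" and eps: "0 < \<epsilon>" "(lambda2 A x0)\<^sup>2 + \<epsilon> < 1"
  obtains \<delta> where "0 < \<delta>" "\<And>x1 n. x1 \<in> ball x0 \<delta> \<Longrightarrow>
      phase_dist x0 ((Fmap A x0 ^^ Suc n) x1) \<le> ((lambda2 A x0)\<^sup>2 + \<epsilon>) * phase_dist x0 ((Fmap A x0 ^^ n) x1) \<and>
      phase_dist x0 ((Fmap A x0 ^^ n) x1) \<le> ((lambda2 A x0)\<^sup>2 + \<epsilon>) ^ n * phase_dist x0 x1"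
proof -
  define \<kappa> where "\<kappa> = (lambda2 A x0)\<^sup>2 + \<epsilon>"
  obtain \<delta> where "0 < \<delta>" and contr: "\<And>x. phase_dist x0 x < \<delta> \<Longrightarrow>
      phase_dist x0 (Fmap A x0 x) \<le> \<kappa> * phase_dist x0 x"
    using phase_dist_Fmap_contraction[OF iso eps(1)] unfolding \<kappa>_def by blast
  have \<kappa>: "0 \<le> \<kappa>" "\<kappa> \<le> 1" using eps unfolding \<kappa>_def by auto
  have "phase_dist x0 x1 < \<delta>" if "x1 \<in> ball x0 \<delta>" for x1
    using that phase_dist_le[of 1 x0 x1] by (simp add: dist_norm norm_minus_commute)
  note near = funpow_contraction_near[of "phase_dist x0" \<delta> "Fmap A x0" \<kappa>, OF contr phase_dist_nonneg \<kappa> this]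
  show ?thesis
    by (rule that[OF \<open>0 < \<delta>\<close>]) (use near contr in \<open>auto simp: \<kappa>_def\<close>)
qed

theorem mainTheorem9:
  fixes A :: "complex^'N^'n" and x0 :: "complex^'n" and \<epsilon> :: real
  assumes iso: "A ** cadj A = mat 1"
    and x0: "x0 \<noteq> 0"
    and lam: "lambda2 A x0 < 1"
    and eps: "0 < \<epsilon>" "\<epsilon> < 1 - (lambda2 A x0)\<^sup>2"
  shows "\<exists>U. open U \<and> x0 \<in> U \<and>
    (\<forall>x1\<in>U. let x = (\<lambda>k::nat. (Fmap A x0 ^^ (k - 1)) x1) in
       (\<forall>k\<ge>1. \<forall>a b. a \<in> align_set x0 (x k) \<longrightarrow> b \<in> align_set x0 (x (k+1)) \<longrightarrow>
           norm (b *s x (k+1) - x0) \<le> ((lambda2 A x0)\<^sup>2 + \<epsilon>) * norm (a *s x k - x0)) \<and>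
       (\<forall>\<alpha>::nat \<Rightarrow> complex. (\<forall>k\<ge>1. \<alpha> k \<in> align_set x0 (x k)) \<longrightarrow>
           (\<lambda>k. \<alpha> k *s x k) \<longlonglongrightarrow> x0))"
proof -
  define \<kappa> where "\<kappa> = (lambda2 A x0)\<^sup>2 + \<epsilon>"
  have \<kappa>: "0 \<le> \<kappa>" "\<kappa> < 1" using eps unfolding \<kappa>_def by auto
  obtain \<delta> where "0 < \<delta>" and iter: "\<And>x1 n. x1 \<in> ball x0 \<delta> \<Longrightarrow>
      phase_dist x0 ((Fmap A x0 ^^ Suc n) x1) \<le> \<kappa> * phase_dist x0 ((Fmap A x0 ^^ n) x1) \<and>
      phase_dist x0 ((Fmap A x0 ^^ n) x1) \<le> \<kappa> ^ n * phase_dist x0 x1"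
    using phase_dist_Fmap_iterates[OF iso eps(1) \<kappa>(2)[unfolded \<kappa>_def]] unfolding \<kappa>_def by blast
  have "norm (b *s (Fmap A x0 ^^ Suc n) x1 - x0) \<le> \<kappa> * norm (a *s (Fmap A x0 ^^ n) x1 - x0)"
    if "x1 \<in> ball x0 \<delta>" "a \<in> align_set x0 ((Fmap A x0 ^^ n) x1)"
      "b \<in> align_set x0 ((Fmap A x0 ^^ Suc n) x1)" for x1 n a b
    using iter[OF that(1), of n] phase_dist_eq_align_set[OF that(2)] phase_dist_eq_align_set[OF that(3)]
    by simp
  moreover have "(\<lambda>k. \<alpha> k *s (Fmap A x0 ^^ (k - 1)) x1) \<longlonglongrightarrow> x0"
    if "x1 \<in> ball x0 \<delta>" "\<forall>k\<ge>1. \<alpha> k \<in> align_set x0 ((Fmap A x0 ^^ (k - 1)) x1)" for x1 \<alpha>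
  proof (rule LIMSEQ_imp_Suc)
    show "(\<lambda>k. \<alpha> (Suc k) *s (Fmap A x0 ^^ (Suc k - 1)) x1) \<longlonglongrightarrow> x0"
      using that iter[OF that(1)] by (auto intro!: LIMSEQ_align_set_geometric[OF _ _ \<kappa>])
  qed
  ultimately show ?thesis
    using \<open>0 < \<delta>\<close> unfolding Let_def \<kappa>_def
    by (intro exI[of _ "ball x0 \<delta>"]) (auto simp: Suc_diff_le dest!: Suc_le_D)
qed

end
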